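(* Let $n\ge 2$, $\sigma\ge 0$, let $z\in\mathbb{C}^n$ satisfy $|z_1|=\cdots=|z_n|=1$, let $W\in\mathbb{C}^{n\times n}$ be $z$-discordant, and let $C=zz^*+\sigma W$. If $x\in\mathbb{C}^n$ satisfies $\|x\|_2^2=n$ and $z^*Cz\le x^*Cx$ (in particular, if $x$ is a global optimizer of $\max x^*Cx$ subject to $|x_1|=\cdots=|x_n|=1$), then \[\min_{\theta\in\mathbb{R}}\|xe^{i\theta}-z\|_2^2=2(n-|z^*x|)\le 144\sigma^2.\]
   Context: For $z\in\mathbb{C}^n$ with unit-modulus entries, a matrix $W\in\mathbb{C}^{n\times n}$ is called $z$-discordant if it is Hermitian and satisfies both $\|W\|_{\mathrm{op}}\le 3\sqrt{n}$ (operator norm = largest singular value) and $\|Wz\|_\infty\le 3\sqrt{n\log n}$, with $\log$ the natural logarithm. *)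

theory Defs
  imports "HOL-Analysis.Analysis"
begin

text \<open>Vectors in C^n are complex ^ 'n, matrices are complex ^ 'n ^ 'n (n = CARD('n)).
The Euclidean norm on complex ^ 'n is the library norm.\<close>

definition hermitian :: "complex ^ 'n ^ 'n \<Rightarrow> bool" where
  "hermitian W \<longleftrightarrow> (\<forall>i j. W $ i $ j = cnj (W $ j $ i))"

definition cinner :: "complex ^ 'n \<Rightarrow> complex ^ 'n \<Rightarrow> complex" where
  "cinner u v = (\<Sum>i\<in>UNIV. cnj (u $ i) * v $ i)"

definition outer :: "complex ^ 'n \<Rightarrow> complex ^ 'n \<Rightarrow> complex ^ 'n ^ 'n" where
  "outer u v = (\<chi> i j. u $ i * cnj (v $ j))"

definition op_norm :: "complex ^ 'n ^ 'n \<Rightarrow> real" where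
  "op_norm W = onorm (\<lambda>v::complex ^ 'n. W *v v)"

definition inf_norm :: "complex ^ 'n \<Rightarrow> real" where
  "inf_norm v = Max (range (\<lambda>i. cmod (v $ i)))"

definition discordant :: "complex ^ 'n \<Rightarrow> complex ^ 'n ^ 'n \<Rightarrow> bool" where
  "discordant z W \<longleftrightarrow> hermitian W
     \<and> op_norm W \<le> 3 * sqrt (real CARD('n))
     \<and> inf_norm (W *v z) \<le> 3 * sqrt (real CARD('n) * ln (real CARD('n)))"

end

theory Submission imports Defs begin

text \<open>The quadratic form of \<open>C = z z\<^sup>* + \<sigma> W\<close> is \<open>|z\<^sup>* x|\<^sup>2 + \<sigma> x\<^sup>* W x\<close>. Rotating \<open>x\<close> by a phase so that
  \<open>a = z\<^sup>* x\<close> becomes real and nonnegative, the optimality hypothesis gives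
  \<open>n\<^sup>2 - a\<^sup>2 \<le> \<sigma> (x\<^sup>* W x - z\<^sup>* W z) = \<sigma> Re ((x - z)\<^sup>* W (x + z)) \<le> \<sigma> \<parallel>W\<parallel> \<parallel>x - z\<parallel> \<parallel>x + z\<parallel>\<close>,
  where \<open>\<parallel>x - z\<parallel> \<parallel>x + z\<parallel> = 2 sqrt (n\<^sup>2 - a\<^sup>2)\<close>. Hence \<open>n (n - a) \<le> n\<^sup>2 - a\<^sup>2 \<le> 4 \<sigma>\<^sup>2 \<parallel>W\<parallel>\<^sup>2 \<le> 36 \<sigma>\<^sup>2 n\<close>.\<close>

lemma norm_vec_power2: "norm (v::complex^'n) ^ 2 = (\<Sum>i\<in>UNIV. cmod (v$i) ^ 2)"
  by (simp add: norm_vec_def L2_set_def sum_nonneg)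

lemma cinner_self: "cinner v v = complex_of_real (norm (v::complex^'n) ^ 2)"
proof -
  have "cinner v v = (\<Sum>i\<in>UNIV. complex_of_real (cmod (v$i) ^ 2))"
    unfolding cinner_def by (rule sum.cong[OF refl]) (metis complex_norm_square mult.commute)
  thus ?thesis by (simp add: norm_vec_power2)
qed

lemma cnj_cinner: "cnj (cinner u v) = cinner v u"
  by (simp add: cinner_def mult.commute)

lemma Re_cinner_commute: "Re (cinner u v) = Re (cinner v u)"
  by (metis cnj_cinner cnj.sel(1))

lemma cinner_add_right: "cinner u (v + w) = cinner u v + cinner u w"
  by (simp add: cinner_def distrib_left sum.distrib)

lemma cinner_add_left: "cinner (u + v) w = cinner u w + cinner v w"
  by (simp add: cinner_def distrib_right sum.distrib)

lemma cinner_diff_right: "cinner u (v - w) = cinner u v - cinner u w"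
  by (simp add: cinner_def right_diff_distrib sum_subtractf)

lemma cinner_diff_left: "cinner (u - v) w = cinner u w - cinner v w"
  by (simp add: cinner_def left_diff_distrib sum_subtractf)

lemma cinner_scale_right: "cinner u (c *s v) = c * cinner u v"
  by (simp add: cinner_def sum_distrib_left algebra_simps)

lemma cinner_scale_left: "cinner (c *s u) v = cnj c * cinner u v"
  by (simp add: cinner_def sum_distrib_left algebra_simps)

lemma cinner_scaleR_right: "cinner u (r *\<^sub>R v) = of_real r * cinner u v"
proof -
  have "(r *\<^sub>R v) $ i = of_real r * v $ i" for i
    by (subst vector_scaleR_component) (simp add: scaleR_conv_of_real)
  thus ?thesis by (simp add: cinner_def sum_distrib_left algebra_simps)
qed

lemma Re_cinner_self: "Re (cinner v v) = norm (v::complex^'n) ^ 2"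
  by (simp add: cinner_self)

lemma norm_add_power2:
  "norm (u + v::complex^'n) ^ 2 = norm u ^ 2 + norm v ^ 2 + 2 * Re (cinner u v)"
  using Re_cinner_commute[of v u]
  by (simp add: cinner_add_right cinner_add_left flip: Re_cinner_self)

lemma norm_diff_power2:
  "norm (u - v::complex^'n) ^ 2 = norm u ^ 2 + norm v ^ 2 - 2 * Re (cinner u v)"
  using Re_cinner_commute[of v u]
  by (simp add: cinner_diff_right cinner_diff_left flip: Re_cinner_self)

lemma norm_scale_vec: "norm (c *s (v::complex^'n)) = cmod c * norm v"
proof -
  have "norm (c *s v) ^ 2 = (cmod c * norm v) ^ 2"
    by (simp add: norm_vec_power2 power_mult_distrib norm_mult sum_distrib_left)
  thus ?thesis by (simp add: power2_eq_iff_nonneg)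
qed

lemma cmod_cinner_le: "cmod (cinner u v) \<le> norm u * norm (v::complex^'n)"
proof -
  have "cmod (cinner u v) \<le> (\<Sum>i\<in>UNIV. cmod (cnj (u$i) * v$i))"
    unfolding cinner_def by (rule norm_sum)
  also have "\<dots> = (\<Sum>i\<in>UNIV. \<bar>cmod (u$i)\<bar> * \<bar>cmod (v$i)\<bar>)" by (simp add: norm_mult)
  also have "\<dots> \<le> L2_set (\<lambda>i. cmod (u$i)) UNIV * L2_set (\<lambda>i. cmod (v$i)) UNIV"
    by (rule L2_set_mult_ineq)
  finally show ?thesis by (simp add: norm_vec_def)
qed

lemma hermitian_cinner_mult:
  assumes "hermitian W"
  shows "cinner u (W *v v) = cinner (W *v u) v"
proof -
  have cnj_entry: "cnj (W$j$i) = W$i$j" for i j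
    using assms[unfolded hermitian_def, rule_format, of j i] by simp
  have "cinner u (W *v v) = (\<Sum>i\<in>UNIV. \<Sum>j\<in>UNIV. cnj (u$i) * W$i$j * v$j)"
    by (simp add: cinner_def matrix_vector_mult_def sum_distrib_left mult.assoc)
  also have "\<dots> = (\<Sum>j\<in>UNIV. \<Sum>i\<in>UNIV. cnj (u$i) * W$i$j * v$j)"
    by (rule sum.swap)
  also have "\<dots> = cinner (W *v u) v"
    unfolding cinner_def matrix_vector_mult_def vec_lambda_beta cnj_sum sum_distrib_right
    by (simp add: cnj_entry mult.commute)
  finally show ?thesis .
qed

lemma norm_mult_le_op_norm: "norm (W *v v) \<le> op_norm W * norm (v::complex^'n)"
  unfolding op_norm_def by (rule onorm) (simp add: linear_conv_bounded_linear)

lemma outer_mult_vec: "outer u u *v v = cinner u v *s u"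
  unfolding outer_def matrix_vector_mult_def cinner_def
  by (simp add: vec_eq_iff sum_distrib_left algebra_simps)

lemma cinner_rank_one_plus_mult:
  "cinner v ((outer z z + \<sigma> *\<^sub>R W) *v v)
     = of_real (cmod (cinner z v) ^ 2) + of_real \<sigma> * cinner v (W *v v)"
proof -
  have "(\<sigma> *\<^sub>R W) *v v = \<sigma> *\<^sub>R (W *v v)"
    by (simp add: vec_eq_iff matrix_vector_mult_def scaleR_sum_right)
  moreover have "cinner z v * cinner v z = of_real (cmod (cinner z v) ^ 2)"
    by (metis cnj_cinner complex_norm_square of_real_power)
  ultimately show ?thesis
    by (simp add: matrix_vector_mult_add_rdistrib outer_mult_vec cinner_add_right
        cinner_scale_right cinner_scaleR_right)
qed

lemma cis_minus_Arg_mult: "cis (- Arg c) * c = of_real (cmod c)"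
  by (metis cis_mult rcis_cmod_Arg rcis_def add.left_inverse cis_zero mult.left_commute
      mult.right_neutral)

lemma Inf_norm_rotate_diff_power2:
  fixes x z :: "complex ^ 'n"
  shows "(INF \<theta>::real. norm (exp (\<i> * of_real \<theta>) *s x - z) ^ 2)
           = norm x ^ 2 + norm z ^ 2 - 2 * cmod (cinner z x)"
proof -
  define c where "c = cinner z x"
  have rotate: "norm (exp (\<i> * of_real t) *s x - z) ^ 2
      = norm x ^ 2 + norm z ^ 2 - 2 * Re (cis t * c)" for t
    by (simp add: norm_diff_power2 norm_scale_vec cinner_scale_left c_def cis_conv_exp
        cnj_cinner[of z x, symmetric])
  show ?thesis
    unfolding rotate c_def[symmetric]
  proof (rule cInf_eq_minimum)
    show "norm x ^ 2 + norm z ^ 2 - 2 * cmod c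
        \<in> range (\<lambda>t. norm x ^ 2 + norm z ^ 2 - 2 * Re (cis t * c))"
      by (rule image_eqI[where x = "- Arg c"]) (simp_all add: cis_minus_Arg_mult)
  next
    fix y assume "y \<in> range (\<lambda>t. norm x ^ 2 + norm z ^ 2 - 2 * Re (cis t * c))"
    then obtain t where "y = norm x ^ 2 + norm z ^ 2 - 2 * Re (cis t * c)" by auto
    moreover have "Re (cis t * c) \<le> cmod c"
      using complex_Re_le_cmod[of "cis t * c"] by (simp add: norm_mult)
    ultimately show "norm x ^ 2 + norm z ^ 2 - 2 * cmod c \<le> y" by simp
  qed
qed

lemma hermitian_quadratic_diff_le:
  assumes "hermitian W"
  shows "Re (cinner x (W *v x)) - Re (cinner z (W *v z))
           \<le> op_norm W * (norm (x - z) * norm (x + z))"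
proof -
  have "Re (cinner x (W *v x)) - Re (cinner z (W *v z)) = Re (cinner (x - z) (W *v (x + z)))"
    using hermitian_cinner_mult[OF assms, of x z] Re_cinner_commute[of "W *v x" z]
    by (simp add: matrix_vector_right_distrib cinner_add_right cinner_diff_left)
  also have "\<dots> \<le> norm (x - z) * norm (W *v (x + z))"
    using complex_Re_le_cmod cmod_cinner_le order_trans by blast
  also have "\<dots> \<le> norm (x - z) * (op_norm W * norm (x + z))"
    by (rule mult_left_mono[OF norm_mult_le_op_norm norm_ge_zero])
  finally show ?thesis by (simp add: algebra_simps)
qed

lemma norm_diff_mult_norm_add_power2:
  fixes x z :: "complex ^ 'n"
  assumes "norm x = norm z"
  shows "(norm (x - z) * norm (x + z)) ^ 2 = 4 * ((norm z ^ 2) ^ 2 - Re (cinner x z) ^ 2)"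
proof -
  have "(norm (x - z) * norm (x + z)) ^ 2 = norm (x - z) ^ 2 * norm (x + z) ^ 2"
    by (simp add: power_mult_distrib)
  also have "\<dots> = (2 * norm z ^ 2 - 2 * Re (cinner x z)) * (2 * norm z ^ 2 + 2 * Re (cinner x z))"
    using assms by (simp add: norm_diff_power2 norm_add_power2)
  also have "\<dots> = 4 * ((norm z ^ 2) ^ 2 - Re (cinner x z) ^ 2)"
    by (simp add: power2_eq_square algebra_simps)
  finally show ?thesis .
qed

text \<open>\<open>d \<le> s p\<close> with \<open>p\<^sup>2 = 4 d\<close> is the self-improving inequality \<open>d\<^sup>2 \<le> 4 s\<^sup>2 d\<close>.\<close>

lemma le_four_square_of_le_mult_twice_sqrt:
  fixes d s p :: real
  assumes "d \<le> s * p" "0 \<le> d" "p ^ 2 = 4 * d"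
  shows "d \<le> 4 * s ^ 2"
proof (cases "d = 0")
  case False
  have "d * d \<le> (s * p) ^ 2"
    using assms(1,2) by (metis abs_le_square_iff abs_of_nonneg order_trans power2_eq_square)
  also have "\<dots> = (4 * s ^ 2) * d" by (simp add: power_mult_distrib assms(3))
  finally show ?thesis using assms(2) False by simp
qed (use assms in simp)

lemma rank_one_plus_gap_le:
  fixes x z :: "complex ^ 'n" and W :: "complex ^ 'n ^ 'n" and \<sigma> :: real
  assumes "hermitian W" and "op_norm W \<le> K" and "0 \<le> \<sigma>" and "norm x = norm z"
    and "Re (cinner z ((outer z z + \<sigma> *\<^sub>R W) *v z))
           \<le> Re (cinner x ((outer z z + \<sigma> *\<^sub>R W) *v x))"
  shows "norm z ^ 2 * (norm z ^ 2 - cmod (cinner z x)) \<le> 4 * (\<sigma> * K) ^ 2"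
proof -
  define N where "N = norm z ^ 2"
  define a where "a = cmod (cinner z x)"
  define Q where "Q v = Re (cinner v (W *v v))" for v
  define u where "u = cis (- Arg (cinner z x))"
  define x' where "x' = u *s x"
  have a_le_N: "a \<le> N"
    using cmod_cinner_le[of z x] assms(4) by (simp add: a_def N_def power2_eq_square)
  have "cmod u = 1" by (simp add: u_def)
  hence unit: "u * cnj u = 1" "cnj u * u = 1"
    by (metis complex_norm_square mult.commute of_real_1 power_one)+
  have x'_aligned: "Re (cinner x' z) = a"
    using cis_minus_Arg_mult Re_cinner_commute
    by (metis Re_complex_of_real a_def cinner_scale_right u_def x'_def)
  have norm_x': "norm x' = norm z"
    using \<open>cmod u = 1\<close> assms(4) by (simp add: x'_def norm_scale_vec)
  have "cinner x' (W *v x') = cinner x (W *v x)"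
    using unit by (simp add: x'_def vector_scalar_commute cinner_scale_left cinner_scale_right
        mult.assoc[symmetric])
  hence Q_x': "Q x' = Q x" by (simp add: Q_def)
  have "N ^ 2 + \<sigma> * Q z \<le> a ^ 2 + \<sigma> * Q x"
    using assms(5)
    by (simp add: cinner_rank_one_plus_mult cinner_self Q_def N_def a_def power2_eq_square
        norm_mult)
  hence "N ^ 2 - a ^ 2 \<le> \<sigma> * (Q x' - Q z)" by (simp add: Q_x' algebra_simps)
  also have "\<dots> \<le> \<sigma> * (op_norm W * (norm (x' - z) * norm (x' + z)))"
    using mult_left_mono[OF hermitian_quadratic_diff_le[OF assms(1)] assms(3)]
    by (simp add: Q_def)
  also have "\<dots> \<le> (\<sigma> * K) * (norm (x' - z) * norm (x' + z))"
    using assms(2,3) by (simp add: mult.assoc mult_left_mono mult_right_mono)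
  finally have "N ^ 2 - a ^ 2 \<le> 4 * (\<sigma> * K) ^ 2"
  proof (rule le_four_square_of_le_mult_twice_sqrt)
    show "0 \<le> N ^ 2 - a ^ 2"
      using a_le_N by (simp add: a_def power_mono)
    show "(norm (x' - z) * norm (x' + z)) ^ 2 = 4 * (N ^ 2 - a ^ 2)"
      using norm_diff_mult_norm_add_power2[OF norm_x'] by (simp add: x'_aligned N_def)
  qed
  moreover have "N * (N - a) \<le> N ^ 2 - a ^ 2"
    using a_le_N norm_ge_zero[of "cinner z x"] unfolding a_def
    by (simp add: power2_eq_square algebra_simps mult_right_mono)
  ultimately show ?thesis by (simp add: N_def a_def)
qed

theorem lemma5:
  fixes z x :: "complex ^ 'n" and W :: "complex ^ 'n ^ 'n" and \<sigma> :: real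
  assumes "CARD('n) \<ge> 2"
    and "\<sigma> \<ge> 0"
    and "\<forall>i. cmod (z $ i) = 1"
    and "discordant z W"
    and "norm x ^ 2 = real CARD('n)"
    and "Re (cinner z ((outer z z + \<sigma> *\<^sub>R W) *v z))
           \<le> Re (cinner x ((outer z z + \<sigma> *\<^sub>R W) *v x))"
  shows "(INF \<theta>::real. norm (exp (\<i> * of_real \<theta>) *s x - z) ^ 2)
           = 2 * (real CARD('n) - cmod (cinner z x))
         \<and> 2 * (real CARD('n) - cmod (cinner z x)) \<le> 144 * \<sigma> ^ 2"
proof -
  define N where "N = real CARD('n)"
  have norm_z: "norm z ^ 2 = N"
    using assms(3) by (simp add: norm_vec_power2 N_def)
  have "norm x = norm z"
    using assms(5) norm_z by (metis N_def norm_ge_zero power2_eq_imp_eq)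
  have W: "hermitian W" "op_norm W \<le> 3 * sqrt N"
    using assms(4) by (auto simp: discordant_def N_def)
  have "N * (N - cmod (cinner z x)) \<le> 4 * (\<sigma> * (3 * sqrt N)) ^ 2"
    using rank_one_plus_gap_le[OF W assms(2) \<open>norm x = norm z\<close> assms(6)] norm_z by simp
  also have "\<dots> = N * (36 * \<sigma> ^ 2)"
    by (simp add: N_def power_mult_distrib)
  finally have "2 * (N - cmod (cinner z x)) \<le> 72 * \<sigma> ^ 2"
    using assms(1) by (simp add: N_def)
  also have "\<dots> \<le> 144 * \<sigma> ^ 2"
    by simp
  finally have "2 * (N - cmod (cinner z x)) \<le> 144 * \<sigma> ^ 2" .
  moreover have "(INF \<theta>::real. norm (exp (\<i> * of_real \<theta>) *s x - z) ^ 2)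
      = 2 * (N - cmod (cinner z x))"
    using \<open>norm x = norm z\<close> norm_z by (simp add: Inf_norm_rotate_diff_power2)
  ultimately show ?thesis
    unfolding N_def by simp
qed

end
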